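(* Let $m,n\in\frac1T\mathbb N$. For homogeneous $a,b\in V$, $i\in\mathbb Q$ and $j\in\mathbb Z$, $$\mathrm{Res}_x(1+x)^ix^jY(b,x)a\equiv(-1)^{j+1}\mathrm{Res}_x(1+x)^{\mathrm{wt}\,a+\mathrm{wt}\,b+m-n-2-i-j}x^jY(a,x)b\pmod{O^T_{0,n,m}(V)}.$$
   Context: $T$ is a positive integer and $V$ is a vertex algebra (vertex operator $Y(a,x)=\sum_{i\in\mathbb Z}a_ix^{-i-1}$, vacuum $\mathbf 1$) with a grading $V=\bigoplus_{i\ge\Delta}V_i$, $\Delta\in\mathbb Z_{\le0}$, such that $\mathbf 1\in V_0$ and $a_iV_j\subset V_{\mathrm{wt}a-1-i+j}$ for homogeneous $a$ ($\mathrm{wt}\,a=k$ for $a\in V_k$). $\mathrm{Res}_x$ is the coefficient of $x^{-1}$ and $(1+x)^c$ is the binomial series in nonnegative powers of $x$. $O^T_{0,n,m}(V)$ is the span of $a_{-2}\mathbf 1+(\mathrm{wt}\,a+m-n)a$ over homogeneous $a\in V$. *)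

theory Defs
  imports Complex_Main
begin

text \<open>A vertex algebra over the complex numbers, given by its scalar multiplication sc,
its modes md a i b (= a_i b, i.e. Y(a,x)b = sum_i a_i b x^(-i-1)) and its vacuum vac.\<close>

definition is_vertex_algebra ::
  "(complex \<Rightarrow> 'v::ab_group_add \<Rightarrow> 'v) \<Rightarrow> ('v \<Rightarrow> int \<Rightarrow> 'v \<Rightarrow> 'v) \<Rightarrow> 'v \<Rightarrow> bool" where
  "is_vertex_algebra sc md vac \<longleftrightarrow>
     vector_space sc \<and>
     (\<forall>a i. Vector_Spaces.linear sc sc (md a i)) \<and>
     (\<forall>i b. Vector_Spaces.linear sc sc (\<lambda>a. md a i b)) \<and>
     (\<forall>a b. \<exists>N. \<forall>i\<ge>N. md a i b = 0) \<and>
     (\<forall>a i. md vac i a = (if i = -1 then a else 0)) \<and>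
     (\<forall>a. md a (-1) vac = a) \<and>
     (\<forall>a i. i \<ge> 0 \<longrightarrow> md a i vac = 0) \<and>
     (\<forall>a b c p q r. \<exists>N0. \<forall>N\<ge>N0.
        (\<Sum>k<N. sc (of_int p gchoose k) (md (md a (r + int k) b) (p + q - int k) c)) =
        (\<Sum>k<N. sc ((-1) ^ k * (of_int r gchoose k))
            (md a (p + r - int k) (md b (q + int k) c)
             - sc ((-1) powi r) (md b (q + r - int k) (md a (p + int k) c)))))"

definition is_graded_VA ::
  "(complex \<Rightarrow> 'v::ab_group_add \<Rightarrow> 'v) \<Rightarrow> ('v \<Rightarrow> int \<Rightarrow> 'v \<Rightarrow> 'v) \<Rightarrow> 'v \<Rightarrow>
   (int \<Rightarrow> 'v set) \<Rightarrow> int \<Rightarrow> bool" where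
  "is_graded_VA sc md vac Vg \<Delta> \<longleftrightarrow>
     is_vertex_algebra sc md vac \<and> \<Delta> \<le> 0 \<and>
     (\<forall>k. module.subspace sc (Vg k)) \<and>
     (\<forall>k<\<Delta>. Vg k = {0}) \<and>
     (\<forall>v. \<exists>f F. finite F \<and> (\<forall>k\<in>F. f k \<in> Vg k) \<and> v = sum f F) \<and>
     (\<forall>f F. finite F \<and> (\<forall>k\<in>F. f k \<in> Vg k) \<and> sum f F = 0 \<longrightarrow> (\<forall>k\<in>F. f k = 0)) \<and>
     vac \<in> Vg 0 \<and>
     (\<forall>a b k l i. a \<in> Vg k \<longrightarrow> b \<in> Vg l \<longrightarrow> md a i b \<in> Vg (k - 1 - i + l))"

definition O_gen ::
  "(complex \<Rightarrow> 'v::ab_group_add \<Rightarrow> 'v) \<Rightarrow> ('v \<Rightarrow> int \<Rightarrow> 'v \<Rightarrow> 'v) \<Rightarrow> 'v \<Rightarrow>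
   (int \<Rightarrow> 'v set) \<Rightarrow> rat \<Rightarrow> rat \<Rightarrow> 'v set" where
  "O_gen sc md vac Vg n m =
     {md a (-2) vac + sc (of_rat (of_int k + m - n)) a | a k. a \<in> Vg k}"

definition O_T0 ::
  "(complex \<Rightarrow> 'v::ab_group_add \<Rightarrow> 'v) \<Rightarrow> ('v \<Rightarrow> int \<Rightarrow> 'v \<Rightarrow> 'v) \<Rightarrow> 'v \<Rightarrow>
   (int \<Rightarrow> 'v set) \<Rightarrow> rat \<Rightarrow> rat \<Rightarrow> 'v set" where
  "O_T0 sc md vac Vg n m = module.span sc (O_gen sc md vac Vg n m)"

text \<open>Res_x (1+x)^c x^j Y(u,x) v = sum_{k\<ge>0} (c choose k) u_{k+j} v (a finite sum).\<close>

definition resY ::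
  "(complex \<Rightarrow> 'v::ab_group_add \<Rightarrow> 'v) \<Rightarrow> ('v \<Rightarrow> int \<Rightarrow> 'v \<Rightarrow> 'v) \<Rightarrow> complex \<Rightarrow> int \<Rightarrow> 'v \<Rightarrow> 'v \<Rightarrow> 'v" where
  "resY sc md c j u v =
     (\<Sum>k\<in>{k::nat. md u (int k + j) v \<noteq> 0}. sc (c gchoose k) (md u (int k + j) v))"

end

theory Submission
  imports Defs "HOL-Computational_Algebra.Formal_Power_Series"
begin

(* Work modulo O = O^T_{0,n,m}(V) and write h = m - n.
   (1) From the Borcherds identity with b = 1 one gets the derivative property
       (a_{-2} 1)_p c = -p a_{p-1} c; since a_{-2} 1 == -(wt a + h) a mod O, an induction
       on p gives  a_{-p-1} 1 == binom(-(wt a + h), p) a  mod O  for homogeneous a.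
   (2) From the Borcherds identity with c = 1 one gets skew symmetry
       b_r a = -(-1)^r sum_t (-1)^t (a_{r+t} b)_{-t-1} 1, hence by (1) each mode b_r a is
       congruent to an explicit linear combination of the modes a_{r+t} b.
   (3) Substituting (2) into Res_x (1+x)^i x^j Y(b,x) a = sum_s binom(i,s) b_{s+j} a and
       collecting the terms with the same mode a_{l+j} b (a Cauchy product), the coefficient
       of a_{l+j} b is a Vandermonde convolution which equals
       (-1)^{j+1} binom(wt a + wt b + h - 2 - i - j, l). *)

locale vertex_algebra =
  fixes sc :: "complex \<Rightarrow> 'v::ab_group_add \<Rightarrow> 'v"
    and md :: "'v \<Rightarrow> int \<Rightarrow> 'v \<Rightarrow> 'v" and vac :: 'v
  assumes VA: "is_vertex_algebra sc md vac"
begin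

sublocale vector_space sc
  using VA by (simp add: is_vertex_algebra_def)

lemma mode_zero_right [simp]: "md a i 0 = 0"
proof -
  have "Vector_Spaces.linear sc sc (md a i)"
    using VA by (simp add: is_vertex_algebra_def)
  then interpret linear_right: Vector_Spaces.linear sc sc "md a i" .
  show ?thesis
    using linear_right.zero .
qed

lemma mode_zero_left [simp]: "md 0 i b = 0"
proof -
  have "Vector_Spaces.linear sc sc (\<lambda>a. md a i b)"
    using VA by (simp add: is_vertex_algebra_def)
  then interpret linear_left: Vector_Spaces.linear sc sc "\<lambda>a. md a i b" .
  show ?thesis
    using linear_left.zero by simp
qed

lemma vacuum_modes: "md vac i a = (if i = -1 then a else 0)"
  using VA by (simp add: is_vertex_algebra_def)

lemma vacuum_right [simp]: "md a (-1) vac = a"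
  using VA by (simp add: is_vertex_algebra_def)

lemma creation: "0 \<le> i \<Longrightarrow> md a i vac = 0"
  using VA by (simp add: is_vertex_algebra_def)

lemma borcherds: "\<exists>N0. \<forall>N\<ge>N0.
    (\<Sum>k<N. sc (of_int p gchoose k) (md (md a (r + int k) b) (p + q - int k) c)) =
    (\<Sum>k<N. sc ((-1) ^ k * (of_int r gchoose k))
        (md a (p + r - int k) (md b (q + int k) c)
         - sc ((-1) powi r) (md b (q + r - int k) (md a (p + int k) c))))"
  using VA unfolding is_vertex_algebra_def by blast

lemma truncation_shifted: "\<exists>N::nat. \<forall>s\<ge>N. md u (int s + j) v = 0"
proof -
  obtain N where "\<forall>i\<ge>N. md u i v = 0"
    using VA unfolding is_vertex_algebra_def by blast
  then show ?thesis by (intro exI[of _ "nat (N - j)"]) auto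
qed

lemma resY_as_sum:
  assumes "\<forall>s\<ge>N. md u (int s + j) v = 0"
  shows "resY sc md c j u v = (\<Sum>s<N. sc (c gchoose s) (md u (int s + j) v))"
  unfolding resY_def
proof (rule sum.mono_neutral_left)
  show "{s. md u (int s + j) v \<noteq> 0} \<subseteq> {..<N}"
    using assms by (auto simp: not_less[symmetric])
qed auto

text \<open>Derivative property: the modes of a_{-2} 1 = D a are (D a)_p = -p a_{p-1}.
  This is the Borcherds identity with b = 1, r = -2, q = 0.\<close>

lemma derivative_modes: "md (md a (-2) vac) p c = sc (- of_int p) (md a (p - 1) c)"
proof -
  obtain N0 where N0: "\<forall>N\<ge>N0.
      (\<Sum>k<N. sc (of_int p gchoose k) (md (md a (-2 + int k) vac) (p + 0 - int k) c)) =
      (\<Sum>k<N. sc ((-1) ^ k * (of_int (-2) gchoose k))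
          (md a (p + (-2) - int k) (md vac (0 + int k) c)
           - sc ((-1) powi (-2)) (md vac (0 + (-2) - int k) (md a (p + int k) c))))"
    using borcherds[where p=p and r="-2" and a=a and b=vac and q=0 and c=c] by blast
  define N where "N = max N0 2"
  have "md (md a (-2) vac) p c + sc (of_int p) (md a (p - 1) c)
      = (\<Sum>k<2. sc (of_int p gchoose k) (md (md a (-2 + int k) vac) (p + 0 - int k) c))"
    by (simp add: numeral_2_eq_2)
  also have "\<dots> = (\<Sum>k<N. sc (of_int p gchoose k) (md (md a (-2 + int k) vac) (p + 0 - int k) c))"
    by (rule sum.mono_neutral_left) (auto simp: N_def creation)
  also have "\<dots> = (\<Sum>k<N. sc ((-1) ^ k * (of_int (-2) gchoose k))
          (md a (p + (-2) - int k) (md vac (0 + int k) c)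
           - sc ((-1) powi (-2)) (md vac (0 + (-2) - int k) (md a (p + int k) c))))"
    by (rule N0[rule_format]) (simp add: N_def)
  also have "\<dots> = 0"
    by (rule sum.neutral) (simp add: vacuum_modes)
  finally have "md (md a (-2) vac) p c + sc (of_int p) (md a (p - 1) c) = 0" .
  then show ?thesis
    by (simp add: eq_neg_iff_add_eq_0)
qed

text \<open>Skew symmetry Y(b,x)a = e^{xD} Y(a,-x) b, written out on modes: this is the Borcherds
  identity with c = 1, p = -1, q = 0, truncated where the modes a_{r+t} b vanish.\<close>

lemma skew_symmetry:
  assumes vanish: "\<forall>t\<ge>N. md a (r + int t) b = 0"
  shows "md b r a =
    (\<Sum>t<N. sc (- ((-1) powi r) * (-1) ^ t) (md (md a (r + int t) b) (-1 - int t) vac))"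
proof -
  obtain N0 where N0: "\<forall>N\<ge>N0.
      (\<Sum>k<N. sc (of_int (-1) gchoose k) (md (md a (r + int k) b) (-1 + 0 - int k) vac)) =
      (\<Sum>k<N. sc ((-1) ^ k * (of_int r gchoose k))
          (md a (-1 + r - int k) (md b (0 + int k) vac)
           - sc ((-1) powi r) (md b (0 + r - int k) (md a (-1 + int k) vac))))"
    using borcherds[where p="-1" and r=r and a=a and b=b and q=0 and c=vac] by blast
  define M where "M = max N0 (max N 1)"
  have minus_one_choose: "(-1::complex) gchoose k = (-1) ^ k" for k
    using gbinomial_negated_upper[of "-1::complex" k] binomial_gbinomial[of k k] by simp
  have "(\<Sum>t<N. sc ((-1) ^ t) (md (md a (r + int t) b) (-1 - int t) vac))
      = (\<Sum>t<M. sc ((-1) ^ t) (md (md a (r + int t) b) (-1 - int t) vac))"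
    by (rule sum.mono_neutral_left) (use vanish in \<open>auto simp: M_def\<close>)
  also have "\<dots> = (\<Sum>k<M. sc (of_int (-1) gchoose k) (md (md a (r + int k) b) (-1 + 0 - int k) vac))"
    by (simp add: minus_one_choose)
  also have "\<dots> = (\<Sum>k<M. sc ((-1) ^ k * (of_int r gchoose k))
          (md a (-1 + r - int k) (md b (0 + int k) vac)
           - sc ((-1) powi r) (md b (0 + r - int k) (md a (-1 + int k) vac))))"
    by (rule N0[rule_format]) (simp add: M_def)
  also have "\<dots> = (\<Sum>k\<in>{0}. sc ((-1) ^ k * (of_int r gchoose k))
          (md a (-1 + r - int k) (md b (0 + int k) vac)
           - sc ((-1) powi r) (md b (0 + r - int k) (md a (-1 + int k) vac))))"
    by (rule sum.mono_neutral_right) (auto simp: M_def creation)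
  also have "\<dots> = - sc ((-1) powi r) (md b r a)"
    by (simp add: creation)
  finally have "(\<Sum>t<N. sc ((-1) ^ t) (md (md a (r + int t) b) (-1 - int t) vac))
      = - sc ((-1) powi r) (md b r a)" .
  then have "sc (- ((-1) powi r))
      (\<Sum>t<N. sc ((-1) ^ t) (md (md a (r + int t) b) (-1 - int t) vac)) = md b r a"
    by simp
  then show ?thesis
    by (simp add: scale_sum_right)
qed

lemma sum_scale_cauchy:
  fixes f :: "nat \<Rightarrow> complex" and g :: "nat \<Rightarrow> nat \<Rightarrow> complex" and A :: "nat \<Rightarrow> 'v"
  assumes vanish: "\<forall>l\<ge>N. A l = 0"
  shows "(\<Sum>s<N. sc (f s) (\<Sum>t<N. sc (g s t) (A (s + t))))
       = (\<Sum>l<N. sc (\<Sum>s\<le>l. f s * g s (l - s)) (A l))"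
proof -
  have support: "l < N" if "A l \<noteq> 0" for l
    using vanish that not_less by blast
  have "(\<Sum>s<N. sc (f s) (\<Sum>t<N. sc (g s t) (A (s + t))))
      = (\<Sum>s<N. \<Sum>t<N. sc (f s * g s t) (A (s + t)))"
    by (simp add: scale_sum_right)
  also have "\<dots> = (\<Sum>(s, t)\<in>{..<N} \<times> {..<N}. sc (f s * g s t) (A (s + t)))"
    by (rule sum.cartesian_product)
  also have "\<dots> = (\<Sum>(s, t)\<in>{(s, t). s + t < N}. sc (f s * g s t) (A (s + t)))"
    by (rule sum.mono_neutral_right) (auto dest: support)
  also have "\<dots> = (\<Sum>l<N. \<Sum>s\<le>l. sc (f s * g s (l - s)) (A (s + (l - s))))"
    by (rule sum.triangle_reindex)
  finally show ?thesis
    by (simp add: scale_sum_left)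
qed

end

text \<open>Coefficients of skew symmetry modulo O: for a mode b_r a with wt a + wt b + m - n = w,
  the coefficient of a_{r+t} b is -(-1)^r (-1)^t binom(-(wt (a_{r+t} b) + m - n), t).\<close>

definition skew_coeff :: "complex \<Rightarrow> int \<Rightarrow> nat \<Rightarrow> complex" where
  "skew_coeff w r t = - ((-1) powi r) * (-1) ^ t * ((of_int r + of_nat t + 1 - w) gchoose t)"

text \<open>Step (3), the combinatorial core: convolving the residue coefficients binom(c, s) with
  the skew coefficients gives, by Vandermonde's identity and upper negation,
  (-1)^{j+1} binom(w - 2 - c - j, l).\<close>

lemma skew_coeff_convolution:
  fixes c w :: complex and j :: int
  shows "(\<Sum>s\<le>l. (c gchoose s) * skew_coeff w (int s + j) (l - s))
       = (-1) powi (j + 1) * ((w - 2 - c - of_int j) gchoose l)"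
proof -
  define x where "x = of_nat l + of_int j + 1 - w"
  have summand: "skew_coeff w (int s + j) (l - s)
      = (-1) powi (j + 1) * (-1) ^ l * (x gchoose (l - s))" if "s \<le> l" for s
  proof -
    have "(-1::complex) powi (int s + j) * (-1) ^ (l - s) = (-1) powi j * (-1) ^ l"
      using that by (simp add: power_int_add mult.commute power_add[symmetric])
    moreover have "of_int (int s + j) + of_nat (l - s) + 1 - w = x"
      using that by (simp add: x_def)
    ultimately show ?thesis
      unfolding skew_coeff_def by (simp add: power_int_add)
  qed
  have "(\<Sum>s\<le>l. (c gchoose s) * skew_coeff w (int s + j) (l - s))
      = (-1) powi (j + 1) * (-1) ^ l * (\<Sum>s\<le>l. (c gchoose s) * (x gchoose (l - s)))"
    by (simp add: summand sum_distrib_left mult.commute mult.left_commute)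
  also have "\<dots> = (-1) powi (j + 1) * ((-1) ^ l * ((c + x) gchoose l))"
    using gbinomial_Vandermonde[of c x l] by (simp add: atMost_atLeast0)
  also have "(-1) ^ l * ((c + x) gchoose l) = (w - 2 - c - of_int j) gchoose l"
    using gbinomial_negated_upper[of "w - 2 - c - of_int j" l] by (simp add: x_def algebra_simps)
  finally show ?thesis .
qed

locale graded_vertex_algebra = vertex_algebra sc md vac
  for sc :: "complex \<Rightarrow> 'v::ab_group_add \<Rightarrow> 'v"
    and md :: "'v \<Rightarrow> int \<Rightarrow> 'v \<Rightarrow> 'v" and vac :: 'v +
  fixes Vg :: "int \<Rightarrow> 'v set" and \<Delta> :: int
  assumes graded: "is_graded_VA sc md vac Vg \<Delta>"
begin

lemma mode_weight: "a \<in> Vg k \<Longrightarrow> b \<in> Vg l \<Longrightarrow> md a i b \<in> Vg (k - 1 - i + l)"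
  using graded unfolding is_graded_VA_def by blast

lemma vacuum_weight: "vac \<in> Vg 0"
  using graded unfolding is_graded_VA_def by blast

lemma derivative_mod_O:
  assumes "a \<in> Vg k"
  shows "md a (-2) vac - sc (- (of_int k + of_rat (m - n))) a \<in> O_T0 sc md vac Vg n m"
proof -
  have "md a (-2) vac + sc (of_rat (of_int k + m - n)) a \<in> O_gen sc md vac Vg n m"
    using assms unfolding O_gen_def by blast
  then have "md a (-2) vac + sc (of_rat (of_int k + m - n)) a \<in> O_T0 sc md vac Vg n m"
    unfolding O_T0_def by (rule span_base)
  moreover have "md a (-2) vac - sc (- (of_int k + of_rat (m - n))) a
      = md a (-2) vac + sc (of_rat (of_int k + m - n)) a"
    by (simp only: scale_minus_left diff_minus_eq_add of_rat_add of_rat_diff of_rat_of_int_eq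
        add_diff_eq)
  ultimately show ?thesis
    by metis
qed

lemma creation_modes_mod_O:
  assumes "u \<in> Vg k"
  shows "md u (- int p - 1) vac - sc ((- (of_int k + of_rat (m - n))) gchoose p) u
         \<in> O_T0 sc md vac Vg n m"
  using assms
proof (induction p arbitrary: u k)
  case 0
  then show ?case by (simp add: O_T0_def span_zero)
next
  case (Suc p)
  define w :: complex where "w = of_int k + of_rat (m - n)"
  define c where "c = (- w - 1) gchoose p"
  define Du where "Du = md u (-2) vac"
  have "Du \<in> Vg (k + 1)"
    using mode_weight[OF Suc.prems vacuum_weight, of "-2"] by (simp add: Du_def add.commute)
  moreover have "- (of_int (k + 1) + of_rat (m - n)) = - w - 1"
    by (simp add: w_def)
  ultimately have IH: "md Du (- int p - 1) vac - sc c Du \<in> O_T0 sc md vac Vg n m"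
    using Suc.IH unfolding c_def by metis
  have D: "Du - sc (- w) u \<in> O_T0 sc md vac Vg n m"
    using derivative_mod_O[OF Suc.prems] by (simp add: Du_def w_def)
  have "md Du (- int p - 1) vac = sc (of_nat (Suc p)) (md u (- int (Suc p) - 1) vac)"
    unfolding Du_def derivative_modes by (simp add: algebra_simps)
  then have Du_mode: "md u (- int (Suc p) - 1) vac = sc (1 / of_nat (Suc p)) (md Du (- int p - 1) vac)"
    using of_nat_neq_0[of p, where 'a=complex] by simp
  have choose_Suc: "(- w) gchoose (Suc p) = (- w) * c / of_nat (Suc p)"
    using gbinomial_absorption[of p "-w"] unfolding c_def
    by (simp add: field_simps del: of_nat_Suc)
  have "md u (- int (Suc p) - 1) vac - sc ((- w) gchoose (Suc p)) u
      = sc (1 / of_nat (Suc p)) (md Du (- int p - 1) vac - sc c Du)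
        + sc (c / of_nat (Suc p)) (Du - sc (- w) u)"
    unfolding Du_mode choose_Suc by (simp add: algebra_simps)
  also have "\<dots> \<in> O_T0 sc md vac Vg n m"
    using IH D unfolding O_T0_def by (intro span_add span_scale)
  finally show ?case by (simp add: w_def)
qed

lemma skew_symmetry_mod_O:
  assumes a: "a \<in> Vg ka" and b: "b \<in> Vg kb"
    and vanish: "\<forall>t\<ge>N. md a (r + int t) b = 0"
  shows "md b r a
    - (\<Sum>t<N. sc (skew_coeff (of_int ka + of_int kb + of_rat (m - n)) r t) (md a (r + int t) b))
    \<in> O_T0 sc md vac Vg n m"
proof -
  have index: "- 1 - int t = - int t - 1" for t
    by simp
  have "md b r a - (\<Sum>t<N. sc (skew_coeff (of_int ka + of_int kb + of_rat (m - n)) r t)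
                           (md a (r + int t) b))
      = (\<Sum>t<N. sc (- ((-1) powi r) * (-1) ^ t)
           (md (md a (r + int t) b) (- int t - 1) vac
            - sc ((- (of_int (ka - 1 - (r + int t) + kb) + of_rat (m - n))) gchoose t)
                (md a (r + int t) b)))"
    unfolding skew_symmetry[OF vanish] skew_coeff_def sum_subtractf[symmetric]
    by (intro sum.cong refl) (simp add: algebra_simps index)
  also have "\<dots> \<in> O_T0 sc md vac Vg n m"
    unfolding O_T0_def
    by (intro span_sum span_scale creation_modes_mod_O[unfolded O_T0_def] mode_weight a b)
  finally show ?thesis .
qed

lemma resY_skew_mod_O:
  fixes m n :: rat
  assumes a: "a \<in> Vg ka" and b: "b \<in> Vg kb"
  defines "w \<equiv> of_int ka + of_int kb + of_rat (m - n)"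
  shows "resY sc md c j b a
         - sc ((-1) powi (j + 1)) (resY sc md (w - 2 - c - of_int j) j a b)
         \<in> O_T0 sc md vac Vg n m"
proof -
  obtain N1 where N1: "\<forall>s\<ge>N1. md b (int s + j) a = 0"
    using truncation_shifted by blast
  obtain N2 where N2: "\<forall>s\<ge>N2. md a (int s + j) b = 0"
    using truncation_shifted by blast
  define N where "N = max N1 N2"
  define A where "A l = md a (int l + j) b" for l
  have ba_vanish: "\<forall>s\<ge>N. md b (int s + j) a = 0"
    using N1 by (simp add: N_def)
  have A_vanish: "\<forall>l\<ge>N. A l = 0"
    using N2 by (simp add: A_def N_def)
  have skew: "md b (int s + j) a - (\<Sum>t<N. sc (skew_coeff w (int s + j) t) (A (s + t)))
      \<in> O_T0 sc md vac Vg n m" for s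
  proof -
    have shift: "md a (int s + j + int t) b = A (s + t)" for t
      by (simp add: A_def add_ac)
    have "\<forall>t\<ge>N. A (s + t) = 0"
      using A_vanish by simp
    then show ?thesis
      using skew_symmetry_mod_O[OF a b, of N "int s + j", unfolded shift] by (simp add: w_def)
  qed
  define S where "S = (\<Sum>s<N. sc (c gchoose s) (\<Sum>t<N. sc (skew_coeff w (int s + j) t) (A (s + t))))"
  have "resY sc md c j b a - S \<in> O_T0 sc md vac Vg n m"
    unfolding resY_as_sum[OF ba_vanish] S_def
    using skew unfolding O_T0_def sum_subtractf[symmetric] scale_right_diff_distrib[symmetric]
    by (intro span_sum span_scale)
  moreover have "S = (\<Sum>l<N. sc ((-1) powi (j + 1) * ((w - 2 - c - of_int j) gchoose l)) (A l))"
    unfolding S_def sum_scale_cauchy[OF A_vanish] skew_coeff_convolution ..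
  also have "\<dots> = sc ((-1) powi (j + 1)) (resY sc md (w - 2 - c - of_int j) j a b)"
    using resY_as_sum[of N a j b] A_vanish by (simp add: A_def scale_sum_right)
  ultimately show ?thesis
    by simp
qed

end

theorem mainTheorem8:
  fixes sc :: "complex \<Rightarrow> 'v::ab_group_add \<Rightarrow> 'v"
    and md :: "'v \<Rightarrow> int \<Rightarrow> 'v \<Rightarrow> 'v" and vac :: 'v
    and Vg :: "int \<Rightarrow> 'v set" and \<Delta> :: int and T :: nat
    and m n i :: rat and j ka kb :: int and a b :: 'v
  assumes "is_graded_VA sc md vac Vg \<Delta>"
    and "0 < T"
    and "\<exists>m'::nat. m = of_nat m' / of_nat T"
    and "\<exists>n'::nat. n = of_nat n' / of_nat T"
    and "a \<in> Vg ka" and "b \<in> Vg kb"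
  shows "resY sc md (of_rat i) j b a
         - sc ((-1) powi (j + 1))
             (resY sc md (of_rat (of_int ka + of_int kb + m - n - 2 - i - of_int j)) j a b)
         \<in> O_T0 sc md vac Vg n m"
proof -
  interpret graded_vertex_algebra sc md vac Vg \<Delta>
    using assms(1) by (simp add: graded_vertex_algebra_def vertex_algebra_def
        graded_vertex_algebra_axioms_def is_graded_VA_def)
  have "(of_rat (of_int ka + of_int kb + m - n - 2 - i - of_int j) :: complex)
      = (of_int ka + of_int kb + of_rat (m - n)) - 2 - of_rat i - of_int j"
    by (simp add: of_rat_add of_rat_diff)
  then show ?thesis
    using resY_skew_mod_O[OF assms(5,6), of "of_rat i" j] by simp
qed

end
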